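(* There exists a constant $\Delta T$ (independent of $\alpha$) such that, for all sufficiently large $\alpha$, $T_{\max}\ge\frac1\lambda\big(\log\alpha-\frac1L\log\log A+\Delta T\big)$. Furthermore, for all $t\le\frac1\lambda\big(\log\alpha-\frac1L\log\log A+\Delta T\big)$, $$\Big\|\frac1\alpha e^{\lambda t}\boldsymbol{\theta}(t)-\bar{\boldsymbol{\theta}}_{\mathrm{init}}\Big\|_2=O(\alpha^{-L}\log A)\cdot e^{L\lambda t},$$ where the $O(\cdot)$ constant does not depend on $\alpha$ or $t$.
   Context: Binary classification setting. Training data $\{(\boldsymbol{x}_i,y_i)\}_{i=1}^n$, $y_i\in\{\pm1\}$. Model $f(\boldsymbol{\theta};\boldsymbol{x})$, $\boldsymbol{\theta}\in\mathbb{R}^D$, $\mathcal{C}^2$ and $L$-homogeneous in $\boldsymbol{\theta}$ for every $\boldsymbol{x}$; $f_i(\boldsymbol{\theta}):=f(\boldsymbol{\theta};\boldsymbol{x}_i)$. Fixed $\bar{\boldsymbol{\theta}}_{\mathrm{init}}$ with $f(\bar{\boldsymbol{\theta}}_{\mathrm{init}};\boldsymbol{x})=0$ for all $\boldsymbol{x}$. Loss $\mathcal{L}(\boldsymbol{\theta})=\frac1n\sum_ie^{-y_if_i(\boldsymbol{\theta})}$, $\mathcal{L}_\lambda=\mathcal{L}+\frac\lambda2\|\boldsymbol{\theta}\|_2^2$, $\lambda=\lambda(\alpha)=\Theta(\alpha^{-p})$ for a constant $p>0$. $\boldsymbol{\theta}(t)$ is the gradient flow $\frac{d\boldsymbol{\theta}}{dt}=-\nabla\mathcal{L}_\lambda(\boldsymbol{\theta})$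 from $\boldsymbol{\theta}(0)=\alpha\bar{\boldsymbol{\theta}}_{\mathrm{init}}$. Assume some $\boldsymbol{h}$ satisfies $y_i\langle\nabla f_i(\bar{\boldsymbol{\theta}}_{\mathrm{init}}),\boldsymbol{h}\rangle>0$ $\forall i$; $\boldsymbol{h}^*_{\mathrm{ntk}}$ is the unit vector in the direction of the unique solution of $\min\frac12\|\boldsymbol{h}\|_2^2$ s.t. $y_i\langle\nabla f_i(\bar{\boldsymbol{\theta}}_{\mathrm{init}}),\boldsymbol{h}\rangle\ge1$, and $\gamma_{\mathrm{ntk}}:=\min_iy_i\langle\nabla f_i(\bar{\boldsymbol{\theta}}_{\mathrm{init}}),\boldsymbol{h}^*_{\mathrm{ntk}}\rangle$. $\epsilon_{\max}>0$ is a fixed constant such that $\max_{i\in[n]}\|\nabla f_i(\boldsymbol{\theta})-\nabla f_i(\bar{\boldsymbol{\theta}}_{\mathrm{init}})\|_2<\frac{\gamma_{\mathrm{ntk}}}2$ whenever $\|\boldsymbol{\theta}-\bar{\boldsymbol{\theta}}_{\mathrm{init}}\|_2<\epsilon_{\max}$. $T_{\max}:=\inf\{t\ge0:\|\frac{e^{\lambda t}}{\alpha}\boldsymbol{\theta}(t)-\bar{\boldsymbol{\theta}}_{\mathrm{init}}\|_2>\epsilon_{\max}\}$ and $A:=\frac{\alpha^{2(L-1)}}{\lambda}$. *)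

theory Defs
  imports "HOL-Analysis.Analysis" "HOL-Library.Landau_Symbols"
begin

definition grad :: "('a::real_inner \<Rightarrow> real) \<Rightarrow> 'a \<Rightarrow> 'a" where
  "grad F th = (THE D. GDERIV F th :> D)"

definition C2_fun :: "('a::euclidean_space \<Rightarrow> real) \<Rightarrow> bool" where
  "C2_fun F \<longleftrightarrow> (\<forall>th. F differentiable (at th)) \<and>
     (\<exists>H :: 'a \<Rightarrow> ('a \<Rightarrow>\<^sub>L 'a). continuous_on UNIV H \<and>
        (\<forall>th. (grad F has_derivative blinfun_apply (H th)) (at th)))"

definition exp_loss :: "nat \<Rightarrow> (nat \<Rightarrow> 'x) \<Rightarrow> (nat \<Rightarrow> real) \<Rightarrow> ('a \<Rightarrow> 'x \<Rightarrow> real) \<Rightarrow> 'a \<Rightarrow> real" where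
  "exp_loss n xs ys f th = (1 / real n) * (\<Sum>i<n. exp (- (ys i * f th (xs i))))"

definition reg_loss :: "real \<Rightarrow> nat \<Rightarrow> (nat \<Rightarrow> 'x) \<Rightarrow> (nat \<Rightarrow> real) \<Rightarrow> ('a::real_normed_vector \<Rightarrow> 'x \<Rightarrow> real) \<Rightarrow> 'a \<Rightarrow> real" where
  "reg_loss lam n xs ys f th = exp_loss n xs ys f th + lam / 2 * (norm th)\<^sup>2"

definition ntk_feasible :: "nat \<Rightarrow> (nat \<Rightarrow> 'x) \<Rightarrow> (nat \<Rightarrow> real) \<Rightarrow> ('a::real_inner \<Rightarrow> 'x \<Rightarrow> real) \<Rightarrow> 'a \<Rightarrow> 'a \<Rightarrow> bool" where
  "ntk_feasible n xs ys f th0 h \<longleftrightarrow>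
     (\<forall>i<n. ys i * inner (grad (\<lambda>th. f th (xs i)) th0) h \<ge> 1)"

definition ntk_sol :: "nat \<Rightarrow> (nat \<Rightarrow> 'x) \<Rightarrow> (nat \<Rightarrow> real) \<Rightarrow> ('a::real_inner \<Rightarrow> 'x \<Rightarrow> real) \<Rightarrow> 'a \<Rightarrow> 'a" where
  "ntk_sol n xs ys f th0 = (THE h. ntk_feasible n xs ys f th0 h \<and>
      (\<forall>h'. ntk_feasible n xs ys f th0 h' \<longrightarrow> (1/2) * (norm h)\<^sup>2 \<le> (1/2) * (norm h')\<^sup>2))"

definition h_ntk :: "nat \<Rightarrow> (nat \<Rightarrow> 'x) \<Rightarrow> (nat \<Rightarrow> real) \<Rightarrow> ('a::real_inner \<Rightarrow> 'x \<Rightarrow> real) \<Rightarrow> 'a \<Rightarrow> 'a" where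
  "h_ntk n xs ys f th0 = sgn (ntk_sol n xs ys f th0)"

definition gamma_ntk :: "nat \<Rightarrow> (nat \<Rightarrow> 'x) \<Rightarrow> (nat \<Rightarrow> real) \<Rightarrow> ('a::real_inner \<Rightarrow> 'x \<Rightarrow> real) \<Rightarrow> 'a \<Rightarrow> real" where
  "gamma_ntk n xs ys f th0 =
     Min ((\<lambda>i. ys i * inner (grad (\<lambda>th. f th (xs i)) th0) (h_ntk n xs ys f th0)) ` {..<n})"

text \<open>T_max := inf {t >= 0. ||e^{lambda t}/alpha theta(t) - theta_init|| > eps_max},
  as an extended real (inf of the empty set = +infinity).\<close>
definition T_max :: "real \<Rightarrow> real \<Rightarrow> (real \<Rightarrow> 'a::real_normed_vector) \<Rightarrow> 'a \<Rightarrow> real \<Rightarrow> ereal" where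
  "T_max lam alpha theta th0 eps =
     Inf (ereal ` {t. t \<ge> 0 \<and> norm ((exp (lam * t) / alpha) *\<^sub>R theta t - th0) > eps})"

end

theory Submission
  imports Defs "HOL-Real_Asymp.Real_Asymp"
begin

text \<open>Let \<open>l\<close> be the loss along the flow and \<open>u t = exp (lam t) / alpha * theta t\<close> the rescaled
  flow. By Euler's identity for homogeneous models, \<open>l' = - |grad l|^2 + L lam M\<close>, where the
  margin moment \<open>M\<close> lies between \<open>- ln n * l\<close> and \<open>- l ln l\<close>; hence \<open>l \<le> 1\<close>, and as long as
  \<open>|grad l|^2 \<le> b l^2\<close> one gets \<open>- ln l t \<le> L lam t ln n + ln (1 + b t)\<close>. The rescaling
  removes the weight decay, so \<open>u\<close> moves only along the loss gradient; while \<open>u\<close> stays in the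
  \<open>eps\<close>-ball around \<open>th0\<close>, the NTK margin \<open>gamma\<close> and homogeneity make \<open>|grad l|\<close> comparable
  to \<open>(alpha exp (- lam t))^(L-1) * l\<close>. Comparing \<open>|u'|\<close> with \<open>- (ln l)'\<close> then gives
  \<open>|u t - th0| \<le> 2 / gamma * alpha^(-L) * exp (L lam t) * (- ln l t)\<close>, which is
  \<open>O(alpha^(-L) ln A) exp (L lam t)\<close> and below \<open>eps / 2\<close> up to the stated time; a continuity
  argument shows that \<open>u\<close> indeed never leaves the ball before then.\<close>

lemma gderiv_unique:
  fixes F :: "'a::real_inner \<Rightarrow> real"
  assumes "GDERIV F x :> D" and "GDERIV F x :> D'"
  shows "D = D'"
proof -
  have "(\<lambda>h. h \<bullet> D) = (\<lambda>h. h \<bullet> D')"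
    using assms unfolding gderiv_def by (rule has_derivative_unique)
  then have "(D - D') \<bullet> (D - D') = 0"
    by (metis inner_diff_left inner_diff_right inner_commute diff_self)
  then show ?thesis by simp
qed

lemma grad_eqI:
  fixes F :: "'a::real_inner \<Rightarrow> real"
  assumes "GDERIV F x :> D"
  shows "grad F x = D"
  unfolding grad_def using assms gderiv_unique by blast

lemma gderiv_grad:
  fixes F :: "'a::euclidean_space \<Rightarrow> real"
  assumes "F differentiable (at x)"
  shows "GDERIV F x :> grad F x"
proof -
  obtain F' where F': "(F has_derivative F') (at x)"
    using assms by (auto simp: differentiable_def)
  have "F' = (\<lambda>h. h \<bullet> adjoint F' 1)"
    using adjoint_works[OF has_derivative_linear[OF F']] by (auto simp: fun_eq_iff)
  then have "GDERIV F x :> adjoint F' 1"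
    using F' by (simp add: gderiv_def)
  then show ?thesis
    by (simp add: grad_eqI)
qed

lemma has_field_derivative_gderiv_compose:
  assumes "GDERIV F (x t) :> D" and "(x has_vector_derivative v) (at t)"
  shows "((\<lambda>s. F (x s)) has_real_derivative v \<bullet> D) (at t)"
proof -
  have "((\<lambda>s. F (x s)) has_derivative (\<lambda>s. (s *\<^sub>R v) \<bullet> D)) (at t)"
    using has_derivative_compose[of x "\<lambda>s. s *\<^sub>R v" t UNIV F "\<lambda>h. h \<bullet> D"] assms
    unfolding gderiv_def has_vector_derivative_def by (simp add: o_def)
  then show ?thesis
    unfolding has_field_derivative_def by (simp add: mult.commute[of _ "v \<bullet> D"])
qed

lemma grad_positively_homogeneous:
  fixes F :: "'a::euclidean_space \<Rightarrow> real"
  assumes diff: "\<And>x. F differentiable (at x)"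
    and hom: "\<And>c x. c > 0 \<Longrightarrow> F (c *\<^sub>R x) = c powr L * F x"
    and "c > 0"
  shows "grad F (c *\<^sub>R x) = c powr (L - 1) *\<^sub>R grad F x"
proof -
  have "GDERIV (\<lambda>y. F (c *\<^sub>R y)) x :> c *\<^sub>R grad F (c *\<^sub>R x)"
    using has_derivative_compose[OF has_derivative_scaleR_right[OF has_derivative_ident]
        gderiv_grad[OF diff, of "c *\<^sub>R x", unfolded gderiv_def]]
    by (simp add: gderiv_def o_def)
  moreover have "GDERIV (\<lambda>y. F (c *\<^sub>R y)) x :> c powr L *\<^sub>R grad F x"
    using gderiv_grad[OF diff, of x] hom[OF \<open>c > 0\<close>]
    unfolding gderiv_def by (auto intro!: derivative_eq_intros)
  ultimately have "c *\<^sub>R grad F (c *\<^sub>R x) = c powr L *\<^sub>R grad F x"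
    by (rule gderiv_unique)
  then have "grad F (c *\<^sub>R x) = inverse c *\<^sub>R (c powr L *\<^sub>R grad F x)"
    using \<open>c > 0\<close> by (metis scaleR_scaleR left_inverse scaleR_one less_irrefl)
  then show ?thesis
    using \<open>c > 0\<close> by (simp add: powr_diff divide_inverse_commute)
qed

lemma inner_grad_self_positively_homogeneous:
  fixes F :: "'a::euclidean_space \<Rightarrow> real"
  assumes diff: "\<And>x. F differentiable (at x)"
    and hom: "\<And>c x. c > 0 \<Longrightarrow> F (c *\<^sub>R x) = c powr L * F x"
  shows "grad F x \<bullet> x = L * F x"
proof -
  have "((\<lambda>c. F (c *\<^sub>R x)) has_derivative (\<lambda>h. (h *\<^sub>R x) \<bullet> grad F x)) (at 1)"
    using has_derivative_compose[OF has_derivative_scaleR_left[OF has_derivative_ident, of x]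
        gderiv_grad[OF diff, of "1 *\<^sub>R x", unfolded gderiv_def]]
    by (simp add: o_def)
  then have along_ray: "((\<lambda>c. F (c *\<^sub>R x)) has_real_derivative grad F x \<bullet> x) (at 1)"
    unfolding has_field_derivative_def by (simp add: mult.commute[of _ "x \<bullet> grad F x"] inner_commute)
  have "((\<lambda>c. c powr L * F x) has_real_derivative L * F x) (at 1)"
    by (auto intro!: derivative_eq_intros)
  then have "((\<lambda>c. F (c *\<^sub>R x)) has_real_derivative L * F x) (at 1)"
    by (rule has_field_derivative_transform_within_open[of _ _ _ "{0<..}"]) (auto simp: hom)
  with along_ray show ?thesis
    by (rule DERIV_unique)
qed

definition exp_loss_grad ::
    "nat \<Rightarrow> (nat \<Rightarrow> 'x) \<Rightarrow> (nat \<Rightarrow> real) \<Rightarrow> ('a::real_inner \<Rightarrow> 'x \<Rightarrow> real) \<Rightarrow> 'a \<Rightarrow> 'a"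
  where
  "exp_loss_grad n xs ys f th =
     - ((1 / real n) *\<^sub>R (\<Sum>i<n. (exp (- (ys i * f th (xs i))) * ys i) *\<^sub>R grad (\<lambda>th. f th (xs i)) th))"

lemma gderiv_exp_loss:
  fixes f :: "'a::euclidean_space \<Rightarrow> 'x \<Rightarrow> real"
  assumes diff: "\<And>i x. (\<lambda>th. f th (xs i)) differentiable (at x)"
  shows "GDERIV (exp_loss n xs ys f) th :> exp_loss_grad n xs ys f th"
proof -
  have "((\<lambda>th. f th (xs i)) has_derivative (\<lambda>h. h \<bullet> grad (\<lambda>th. f th (xs i)) th)) (at th)" for i
    using gderiv_grad[OF diff] by (simp add: gderiv_def)
  then have "(exp_loss n xs ys f has_derivative (\<lambda>h. 1 / real n *
      (\<Sum>i<n. - (ys i * (h \<bullet> grad (\<lambda>th. f th (xs i)) th)) * exp (- (ys i * f th (xs i)))))) (at th)"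
    unfolding exp_loss_def[abs_def] by (intro derivative_intros)
  moreover have "(\<lambda>h. 1 / real n *
      (\<Sum>i<n. - (ys i * (h \<bullet> grad (\<lambda>th. f th (xs i)) th)) * exp (- (ys i * f th (xs i)))))
      = (\<lambda>h. h \<bullet> exp_loss_grad n xs ys f th)"
    by (auto simp: exp_loss_grad_def inner_sum_right sum_distrib_left algebra_simps sum_negf)
  ultimately show ?thesis
    unfolding gderiv_def by simp
qed

lemma grad_reg_loss:
  fixes f :: "'a::euclidean_space \<Rightarrow> 'x \<Rightarrow> real"
  assumes diff: "\<And>i x. (\<lambda>th. f th (xs i)) differentiable (at x)"
  shows "grad (reg_loss lam n xs ys f) th = exp_loss_grad n xs ys f th + lam *\<^sub>R th"
proof (rule grad_eqI)
  have "(exp_loss n xs ys f has_derivative (\<lambda>h. h \<bullet> exp_loss_grad n xs ys f th)) (at th)"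
    using gderiv_exp_loss[where xs=xs and f=f, OF diff] by (simp add: gderiv_def)
  then have "((\<lambda>th. exp_loss n xs ys f th + lam / 2 * (th \<bullet> th)) has_derivative
      (\<lambda>h. h \<bullet> exp_loss_grad n xs ys f th + lam / 2 * (th \<bullet> h + h \<bullet> th))) (at th)"
    by (intro derivative_intros)
  moreover have "(\<lambda>h. h \<bullet> exp_loss_grad n xs ys f th + lam / 2 * (th \<bullet> h + h \<bullet> th))
      = (\<lambda>h. h \<bullet> (exp_loss_grad n xs ys f th + lam *\<^sub>R th))"
    by (auto simp: inner_add_right inner_commute algebra_simps)
  moreover have "reg_loss lam n xs ys f = (\<lambda>th. exp_loss n xs ys f th + lam / 2 * (th \<bullet> th))"
    by (auto simp: reg_loss_def[abs_def] power2_norm_eq_inner)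
  ultimately show "GDERIV (reg_loss lam n xs ys f) th :> exp_loss_grad n xs ys f th + lam *\<^sub>R th"
    unfolding gderiv_def by simp
qed

lemma inner_exp_loss_grad_self:
  fixes f :: "'a::euclidean_space \<Rightarrow> 'x \<Rightarrow> real"
  assumes euler: "\<And>i. grad (\<lambda>th. f th (xs i)) x \<bullet> x = L * f x (xs i)"
  shows "x \<bullet> exp_loss_grad n xs ys f x
    = - L * (1 / real n * (\<Sum>i<n. exp (- (ys i * f x (xs i))) * (ys i * f x (xs i))))"
  using euler
  by (simp add: exp_loss_grad_def inner_sum_right inner_commute sum_distrib_left sum_negf algebra_simps)

lemma mean_exp_neg_mult_le_entropy:
  fixes m :: "nat \<Rightarrow> real"
  assumes "n \<ge> 1"
  defines "l \<equiv> 1 / real n * (\<Sum>i<n. exp (- m i))"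
  shows "1 / real n * (\<Sum>i<n. exp (- m i) * m i) \<le> - l * ln l"
proof -
  have "l > 0"
    unfolding l_def using assms by (intro mult_pos_pos sum_pos) (auto simp: lessThan_empty_iff)
  have "exp (- m i) * m i \<le> exp (- m i) * (- ln l) - exp (- m i) + l" for i
  proof -
    have "ln (l / exp (- m i)) \<le> l / exp (- m i) - 1"
      using \<open>l > 0\<close> by (intro ln_le_minus_one) auto
    then have "exp (- m i) * (ln l + m i) \<le> exp (- m i) * (l / exp (- m i) - 1)"
      using \<open>l > 0\<close> by (intro mult_left_mono) (auto simp: ln_div)
    then show ?thesis
      by (simp add: algebra_simps)
  qed
  then have "(\<Sum>i<n. exp (- m i) * m i) \<le> (\<Sum>i<n. exp (- m i) * (- ln l) - exp (- m i) + l)"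
    by (intro sum_mono)
  also have "\<dots> = real n * (- l * ln l)"
    using assms by (simp add: l_def sum.distrib sum_subtractf sum_distrib_right algebra_simps)
  finally show ?thesis
    using assms by (simp add: field_simps)
qed

lemma mean_exp_neg_mult_ge:
  fixes m :: "nat \<Rightarrow> real"
  assumes "n \<ge> 1"
  defines "l \<equiv> 1 / real n * (\<Sum>i<n. exp (- m i))"
  assumes "l \<le> 1"
  shows "1 / real n * (\<Sum>i<n. exp (- m i) * m i) \<ge> - ln (real n) * l"
proof -
  have "exp (- m i) * (- ln (real n)) \<le> exp (- m i) * m i" if "i < n" for i
  proof -
    have "exp (- m i) \<le> (\<Sum>j<n. exp (- m j))"
      using that by (intro member_le_sum) auto
    also have "\<dots> \<le> real n"
      using assms by (simp add: l_def field_simps)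
    finally have "- m i \<le> ln (real n)"
      using assms by (simp add: ln_ge_iff)
    then show ?thesis
      by (intro mult_left_mono) auto
  qed
  then have "(\<Sum>i<n. exp (- m i) * (- ln (real n))) \<le> (\<Sum>i<n. exp (- m i) * m i)"
    by (intro sum_mono) auto
  moreover have "(\<Sum>i<n. exp (- m i) * (- ln (real n))) = real n * (- ln (real n) * l)"
    using assms by (simp add: l_def sum_distrib_left sum_negf mult.commute)
  ultimately show ?thesis
    using assms by (simp add: field_simps)
qed

lemma bootstrap_bound:
  fixes \<phi> B :: "real \<Rightarrow> real"
  assumes cont: "continuous_on {0..T} \<phi>"
    and bound: "\<And>t. 0 \<le> t \<Longrightarrow> (\<And>s. 0 < s \<Longrightarrow> s < t \<Longrightarrow> \<phi> s < eps) \<Longrightarrow> \<phi> t \<le> B t"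
    and small: "\<And>t. 0 \<le> t \<Longrightarrow> t \<le> T \<Longrightarrow> B t < eps"
    and t: "0 \<le> t" "t \<le> T"
  shows "\<phi> t \<le> B t"
proof -
  define E where "E = {0..T} \<inter> \<phi> -` {eps..}"
  have "E = {}"
  proof (rule ccontr)
    assume "E \<noteq> {}"
    moreover have bdd: "bdd_below E"
      unfolding E_def by (rule bdd_belowI[of _ 0]) auto
    moreover have "closed E"
      unfolding E_def using cont by (intro continuous_closed_preimage) auto
    ultimately have "Inf E \<in> E"
      by (rule closed_contains_Inf)
    then have Inf: "0 \<le> Inf E" "Inf E \<le> T" "eps \<le> \<phi> (Inf E)"
      unfolding E_def by auto
    have "\<phi> (Inf E) \<le> B (Inf E)"
    proof (rule bound[OF Inf(1)])
      fix s assume s: "0 < s" "s < Inf E"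
      then have "s \<notin> E"
        using bdd cInf_lower by force
      then show "\<phi> s < eps"
        using s Inf unfolding E_def by auto
    qed
    then show False
      using small[OF Inf(1,2)] Inf(3) by simp
  qed
  show ?thesis
  proof (rule bound[OF t(1)])
    fix s assume s: "0 < s" "s < t"
    have "s \<notin> E"
      using \<open>E = {}\<close> by simp
    then show "\<phi> s < eps"
      using s t unfolding E_def by auto
  qed
qed

text \<open>An abstraction of the loss \<open>l\<close> along the regularized flow: \<open>v\<close> is the norm of the
  loss gradient and \<open>c * M\<close> the contribution of the weight decay, which Euler's identity for
  homogeneous models expresses through the margins.\<close>

locale loss_ode =
  fixes l M v :: "real \<Rightarrow> real" and c :: real
  assumes pos: "\<And>t. t \<ge> 0 \<Longrightarrow> l t > 0"
    and initial: "l 0 = 1"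
    and cont: "continuous_on {0..} l"
    and deriv: "\<And>t. t > 0 \<Longrightarrow> (l has_real_derivative - (v t)\<^sup>2 + c * M t) (at t)"
    and M_le_entropy: "\<And>t. t \<ge> 0 \<Longrightarrow> M t \<le> - l t * ln (l t)"
    and c_nonneg: "c \<ge> 0"
begin

lemma continuous_on_interval: "continuous_on {0..T} l"
  using cont by (rule continuous_on_subset) auto

lemma le_one:
  assumes "t \<ge> 0"
  shows "l t \<le> 1"
proof -
  have "exp (c * t) * ln (l t) \<le> exp (c * 0) * ln (l 0)"
  proof (rule DERIV_nonpos_imp_decreasing_open[OF \<open>t \<ge> 0\<close>])
    fix x assume x: "0 < x" "x < t"
    have D: "((\<lambda>y. exp (c * y) * ln (l y)) has_real_derivative
        exp (c * x) * c * ln (l x) + exp (c * x) * ((- (v x)\<^sup>2 + c * M x) / l x)) (at x)"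
      using deriv[of x] pos[of x] x by (auto intro!: derivative_eq_intros)
    have "c * M x \<le> c * (- l x * ln (l x))"
      using mult_left_mono[OF M_le_entropy c_nonneg] x by simp
    then have "(- (v x)\<^sup>2 + c * M x) / l x \<le> - c * ln (l x)"
      using pos[of x] x by (simp add: divide_le_eq algebra_simps) (smt (verit) zero_le_power2)
    then have "exp (c * x) * c * ln (l x) + exp (c * x) * ((- (v x)\<^sup>2 + c * M x) / l x) \<le> 0"
      using mult_left_mono[of _ _ "exp (c * x)"] by (fastforce simp: algebra_simps)
    with D show "\<exists>y. ((\<lambda>y. exp (c * y) * ln (l y)) has_real_derivative y) (at x) \<and> y \<le> 0"
      by blast
  next
    show "continuous_on {0..t} (\<lambda>y. exp (c * y) * ln (l y))"
      using continuous_on_interval pos by (intro continuous_intros) (auto simp: less_le)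
  qed
  then have "ln (l t) \<le> 0"
    using initial by (simp add: mult_le_0_iff)
  then show ?thesis
    using pos[OF \<open>t \<ge> 0\<close>] by simp
qed

lemma inverse_le:
  assumes M_ge: "\<And>t. t \<ge> 0 \<Longrightarrow> M t \<ge> - k * l t"
    and v_le: "\<And>t. 0 < t \<Longrightarrow> t < T \<Longrightarrow> (v t)\<^sup>2 \<le> b * (l t)\<^sup>2"
    and "k \<ge> 0" "b \<ge> 0" "T \<ge> 0"
  shows "inverse (l T) \<le> exp (c * k * T) * (1 + b * T)"
proof -
  have ck: "c * k \<ge> 0"
    using c_nonneg \<open>k \<ge> 0\<close> by simp
  have "exp (- (c * k) * T) * inverse (l T) - b * T \<le> exp (- (c * k) * 0) * inverse (l 0) - b * 0"
  proof (rule DERIV_nonpos_imp_decreasing_open[OF \<open>T \<ge> 0\<close>])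
    fix x assume x: "0 < x" "x < T"
    define l' where "l' = - (v x)\<^sup>2 + c * M x"
    define e where "e = exp (- (c * k) * x)"
    have lx: "l x > 0"
      using pos x by simp
    have e: "e > 0" "e \<le> 1"
      using ck x by (auto simp: e_def)
    have D: "((\<lambda>y. exp (- (c * k) * y) * inverse (l y) - b * y) has_real_derivative
        e * (- (c * k)) * inverse (l x) + e * (- (inverse (l x))\<^sup>2 * l') - b) (at x)"
      using deriv[of x] x lx unfolding l'_def e_def
      by (auto intro!: derivative_eq_intros simp: field_simps power2_eq_square)
    have "- (c * M x) \<le> c * k * l x"
      using mult_left_mono[OF M_ge c_nonneg, of x] x by simp
    then have "- l' \<le> b * (l x)\<^sup>2 + c * k * l x"
      using v_le[of x] x by (simp add: l'_def)
    then have "- l' * (inverse (l x))\<^sup>2 \<le> (b * (l x)\<^sup>2 + c * k * l x) * (inverse (l x))\<^sup>2"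
      by (intro mult_right_mono) auto
    also have "\<dots> = b + c * k * inverse (l x)"
      using lx by (simp add: field_simps power2_eq_square)
    finally have "e * (- (inverse (l x))\<^sup>2 * l') \<le> e * (b + c * k * inverse (l x))"
      using e by (intro mult_left_mono) (auto simp: algebra_simps)
    then have "e * (- (c * k)) * inverse (l x) + e * (- (inverse (l x))\<^sup>2 * l') - b \<le> b * (e - 1)"
      by (simp add: algebra_simps)
    also have "\<dots> \<le> 0"
      using \<open>b \<ge> 0\<close> e by (simp add: mult_le_0_iff)
    finally show "\<exists>y. ((\<lambda>y. exp (- (c * k) * y) * inverse (l y) - b * y) has_real_derivative y) (at x)
        \<and> y \<le> 0"
      using D by blast
  next
    show "continuous_on {0..T} (\<lambda>y. exp (- (c * k) * y) * inverse (l y) - b * y)"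
      using continuous_on_interval pos by (intro continuous_intros) (auto simp: less_le)
  qed
  then have "exp (- (c * k) * T) * inverse (l T) \<le> 1 + b * T"
    using initial by simp
  then have "exp (c * k * T) * (exp (- (c * k) * T) * inverse (l T)) \<le> exp (c * k * T) * (1 + b * T)"
    by (intro mult_left_mono) auto
  then show ?thesis
    by (simp add: exp_minus field_simps)
qed

lemma neg_ln_le:
  assumes "\<And>t. t \<ge> 0 \<Longrightarrow> M t \<ge> - k * l t"
    and "\<And>t. 0 < t \<Longrightarrow> t < T \<Longrightarrow> (v t)\<^sup>2 \<le> b * (l t)\<^sup>2"
    and "k \<ge> 0" "b \<ge> 0" "T \<ge> 0"
  shows "- ln (l T) \<le> c * k * T + ln (1 + b * T)"
proof -
  have "ln (inverse (l T)) \<le> ln (exp (c * k * T) * (1 + b * T))"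
    using inverse_le[OF assms] pos[OF \<open>T \<ge> 0\<close>] \<open>b \<ge> 0\<close> \<open>T \<ge> 0\<close>
    by (subst ln_le_cancel_iff) (auto intro!: mult_pos_pos add_pos_nonneg)
  also have "\<dots> = c * k * T + ln (1 + b * T)"
    using \<open>b \<ge> 0\<close> \<open>T \<ge> 0\<close> add_pos_nonneg[of 1 "b * T"] by (subst ln_mult) auto
  finally show ?thesis
    using pos[OF \<open>T \<ge> 0\<close>] by (simp add: ln_inverse)
qed

lemma inner_displacement_le:
  fixes u W :: "real \<Rightarrow> 'a::real_inner"
  assumes u_cont: "continuous_on {0..} u"
    and u_deriv: "\<And>t. t > 0 \<Longrightarrow> (u has_vector_derivative W t) (at t)"
    and W_le: "\<And>t. 0 < t \<Longrightarrow> t < T \<Longrightarrow> norm (W t) \<le> a * exp (c * t) * (v t)\<^sup>2 / l t"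
    and "a \<ge> 0" "T \<ge> 0" "norm e \<le> 1"
  shows "(u T - u 0) \<bullet> e \<le> a * exp (c * T) * (- ln (l T))"
proof -
  define \<Phi> where "\<Phi> y = a * exp (c * y) * (- ln (l y)) - (u y - u 0) \<bullet> e" for y
  have "\<Phi> 0 \<le> \<Phi> T"
  proof (rule DERIV_nonneg_imp_increasing_open[OF \<open>T \<ge> 0\<close>])
    fix x assume x: "0 < x" "x < T"
    define l' where "l' = - (v x)\<^sup>2 + c * M x"
    have lx: "l x > 0"
      using pos x by simp
    have "((\<lambda>y. (u y - u 0) \<bullet> e) has_real_derivative W x \<bullet> e) (at x)"
      using u_deriv[of x] x unfolding has_field_derivative_def has_vector_derivative_def
      by (auto intro!: derivative_eq_intros simp: fun_eq_iff)
    then have D: "(\<Phi> has_real_derivative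
        a * (exp (c * x) * c * (- ln (l x)) + exp (c * x) * (- (l' / l x))) - W x \<bullet> e) (at x)"
      using deriv[of x] x lx unfolding \<Phi>_def[abs_def] l'_def
      by (auto intro!: derivative_eq_intros simp: field_simps)
    have "c * M x \<le> c * (- l x * ln (l x))"
      using mult_left_mono[OF M_le_entropy c_nonneg] x by simp
    then have "(v x)\<^sup>2 / l x \<le> ((v x)\<^sup>2 + (- c * M x - c * l x * ln (l x))) / l x"
      using lx by (intro divide_right_mono) (auto simp: algebra_simps)
    also have "\<dots> = c * (- ln (l x)) + (- (l' / l x))"
      using lx by (simp add: l'_def field_simps)
    finally have "a * exp (c * x) * ((v x)\<^sup>2 / l x) \<le> a * exp (c * x) * (c * (- ln (l x)) + (- (l' / l x)))"
      using \<open>a \<ge> 0\<close> by (intro mult_left_mono) auto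
    moreover have "W x \<bullet> e \<le> norm (W x)"
      using norm_cauchy_schwarz[of "W x" e] mult_left_le[OF \<open>norm e \<le> 1\<close> norm_ge_zero[of "W x"]]
      by linarith
    ultimately have "0 \<le> a * (exp (c * x) * c * (- ln (l x)) + exp (c * x) * (- (l' / l x))) - W x \<bullet> e"
      using W_le[OF x] by (simp add: algebra_simps)
    then show "\<exists>y. (\<Phi> has_real_derivative y) (at x) \<and> 0 \<le> y"
      using D by blast
  next
    have "continuous_on {0..T} u"
      using u_cont by (rule continuous_on_subset) auto
    moreover have "\<forall>y\<in>{0..T}. l y > 0"
      using pos by simp
    ultimately show "continuous_on {0..T} \<Phi>"
      unfolding \<Phi>_def using continuous_on_interval by (intro continuous_intros) auto
  qed
  then show ?thesis
    using initial by (simp add: \<Phi>_def)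
qed

lemma displacement_le:
  fixes u W :: "real \<Rightarrow> 'a::real_inner"
  assumes "continuous_on {0..} u"
    and "\<And>t. t > 0 \<Longrightarrow> (u has_vector_derivative W t) (at t)"
    and "\<And>t. 0 < t \<Longrightarrow> t < T \<Longrightarrow> norm (W t) \<le> a * exp (c * t) * (v t)\<^sup>2 / l t"
    and "a \<ge> 0" "T \<ge> 0"
  shows "norm (u T - u 0) \<le> a * exp (c * T) * (- ln (l T))"
proof -
  have "(u T - u 0) \<bullet> sgn (u T - u 0) = norm (u T - u 0)"
    by (cases "u T = u 0") (simp_all add: sgn_div_norm power2_norm_eq_inner[symmetric] power2_eq_square)
  then show ?thesis
    using inner_displacement_le[OF assms, of "sgn (u T - u 0)"] by (simp add: norm_sgn)
qed

lemma displacement_bound: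
  fixes u W :: "real \<Rightarrow> 'a::real_inner"
  assumes M_ge: "\<And>t. t \<ge> 0 \<Longrightarrow> l t \<le> 1 \<Longrightarrow> M t \<ge> - k * l t"
    and u_cont: "continuous_on {0..} u"
    and u_deriv: "\<And>t. t > 0 \<Longrightarrow> (u has_vector_derivative W t) (at t)"
    and near_bounds: "\<And>t. t > 0 \<Longrightarrow> norm (u t - u 0) < eps \<Longrightarrow>
        norm (W t) \<le> a * exp (c * t) * (v t)\<^sup>2 / l t \<and> (v t)\<^sup>2 \<le> b * (l t)\<^sup>2"
    and "a \<ge> 0" "b \<ge> 0" "k \<ge> 0"
    and small: "\<And>t. 0 \<le> t \<Longrightarrow> t \<le> T \<Longrightarrow> a * exp (c * t) * (c * k * t + ln (1 + b * t)) < eps"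
    and t: "0 \<le> t" "t \<le> T"
  shows "norm (u t - u 0) \<le> a * exp (c * t) * (c * k * t + ln (1 + b * t))"
proof (rule bootstrap_bound[where \<phi> = "\<lambda>t. norm (u t - u 0)", OF _ _ small t])
  show "continuous_on {0..T} (\<lambda>t. norm (u t - u 0))"
    by (intro continuous_intros continuous_on_subset[OF u_cont]) auto
next
  fix t :: real
  assume "0 \<le> t" and near: "\<And>s. 0 < s \<Longrightarrow> s < t \<Longrightarrow> norm (u s - u 0) < eps"
  have "norm (u t - u 0) \<le> a * exp (c * t) * (- ln (l t))"
    using near_bounds near by (intro displacement_le[OF u_cont u_deriv _ \<open>a \<ge> 0\<close> \<open>0 \<le> t\<close>]) auto
  also have "\<dots> \<le> a * exp (c * t) * (c * k * t + ln (1 + b * t))"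
    using M_ge le_one near_bounds near \<open>a \<ge> 0\<close> \<open>b \<ge> 0\<close> \<open>k \<ge> 0\<close> \<open>0 \<le> t\<close>
    by (intro mult_left_mono neg_ln_le) auto
  finally show "norm (u t - u 0) \<le> a * exp (c * t) * (c * k * t + ln (1 + b * t))" .
qed

end

lemma weighted_sum_bounds:
  fixes v :: "nat \<Rightarrow> 'a::real_inner"
  assumes w: "\<And>i. i < n \<Longrightarrow> w i \<ge> 0" and y: "\<And>i. i < n \<Longrightarrow> \<bar>y i\<bar> = 1"
    and lower: "\<And>i. i < n \<Longrightarrow> y i * (v i \<bullet> h) \<ge> A"
    and upper: "\<And>i. i < n \<Longrightarrow> norm (v i) \<le> B"
  shows "A * (\<Sum>i<n. w i) \<le> (\<Sum>i<n. (w i * y i) *\<^sub>R v i) \<bullet> h"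
    and "norm (\<Sum>i<n. (w i * y i) *\<^sub>R v i) \<le> B * (\<Sum>i<n. w i)"
proof -
  have "(\<Sum>i<n. w i * A) \<le> (\<Sum>i<n. w i * (y i * (v i \<bullet> h)))"
    by (intro sum_mono mult_left_mono) (use w lower in auto)
  then show "A * (\<Sum>i<n. w i) \<le> (\<Sum>i<n. (w i * y i) *\<^sub>R v i) \<bullet> h"
    by (simp add: inner_sum_left sum_distrib_left algebra_simps)
  have "norm (\<Sum>i<n. (w i * y i) *\<^sub>R v i) \<le> (\<Sum>i<n. norm ((w i * y i) *\<^sub>R v i))"
    by (rule norm_sum)
  also have "\<dots> = (\<Sum>i<n. w i * norm (v i))"
    by (intro sum.cong) (use w y in \<open>auto simp: abs_mult\<close>)
  also have "\<dots> \<le> (\<Sum>i<n. w i * B)"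
    by (intro sum_mono mult_left_mono) (use w upper in auto)
  finally show "norm (\<Sum>i<n. (w i * y i) *\<^sub>R v i) \<le> B * (\<Sum>i<n. w i)"
    by (simp add: sum_distrib_left mult.commute)
qed

lemma T_max_ge:
  assumes "\<And>t. 0 \<le> t \<Longrightarrow> t \<le> T \<Longrightarrow> norm ((exp (lam * t) / alpha) *\<^sub>R theta t - th0) \<le> eps"
  shows "ereal T \<le> T_max lam alpha theta th0 eps"
  unfolding T_max_def
proof (rule Inf_greatest)
  fix x
  assume "x \<in> ereal ` {t. t \<ge> 0 \<and> norm ((exp (lam * t) / alpha) *\<^sub>R theta t - th0) > eps}"
  then obtain t where "x = ereal t" "t \<ge> 0" "norm ((exp (lam * t) / alpha) *\<^sub>R theta t - th0) > eps"
    by auto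
  then show "ereal T \<le> x"
    using assms[of t] by force
qed

lemma growth_terms_le_ln_ratio:
  fixes alpha lam L p G A t :: real and n :: nat
  assumes "alpha \<ge> 1" "lam > 0" "L > 0" "p > 0" "n \<ge> 1" "t \<ge> 0"
    and A: "alpha powr (2 * L - 2) = A * lam" "1 + G\<^sup>2 * ln alpha \<le> A" "ln alpha \<le> 2 / p * ln A"
    and lat: "lam * t \<le> ln alpha"
  shows "L * lam * ln (real n) * t + ln (1 + G\<^sup>2 * alpha powr (2 * L - 2) * t)
    \<le> (2 * L * ln (real n) / p + 2) * ln A"
proof -
  have "A \<ge> 1"
    using A(2) \<open>alpha \<ge> 1\<close> by (smt (verit) zero_le_power2 mult_nonneg_nonneg ln_ge_zero)
  have "L * lam * ln (real n) * t = L * ln (real n) * (lam * t)"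
    by (simp add: algebra_simps)
  also have "\<dots> \<le> L * ln (real n) * (2 / p * ln A)"
    using lat A(3) \<open>L > 0\<close> \<open>n \<ge> 1\<close> by (intro mult_left_mono) auto
  finally have lin: "L * lam * ln (real n) * t \<le> 2 * L * ln (real n) / p * ln A"
    by (simp add: mult_ac)
  have "1 + G\<^sup>2 * alpha powr (2 * L - 2) * t = 1 + G\<^sup>2 * A * (lam * t)"
    unfolding A(1) by (simp add: algebra_simps)
  also have "\<dots> \<le> 1 + G\<^sup>2 * A * ln alpha"
    using lat \<open>A \<ge> 1\<close> by (intro add_left_mono mult_left_mono) auto
  also have "\<dots> \<le> A * A"
    using mult_left_mono[OF A(2), of A] \<open>A \<ge> 1\<close> by (simp add: algebra_simps)
  finally have "ln (1 + G\<^sup>2 * alpha powr (2 * L - 2) * t) \<le> ln (A * A)"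
    using \<open>alpha \<ge> 1\<close> \<open>t \<ge> 0\<close> \<open>A \<ge> 1\<close> by (subst ln_le_cancel_iff) (auto intro: add_pos_nonneg)
  also have "\<dots> = 2 * ln A"
    using \<open>A \<ge> 1\<close> by (simp add: ln_mult)
  finally show ?thesis
    using lin by (simp add: algebra_simps)
qed

lemma scaled_exp_le_exp_shift:
  fixes alpha L A lam t DT :: real
  assumes "alpha > 0" "L > 0" "ln A > 0" and lat: "lam * t \<le> ln alpha - ln (ln A) / L + DT"
  shows "alpha powr (- L) * ln A * exp (L * lam * t) \<le> exp (L * DT)"
proof -
  have "exp (L * lam * t) \<le> exp (L * (ln alpha - ln (ln A) / L + DT))"
  proof -
    have "L * (lam * t) \<le> L * (ln alpha - ln (ln A) / L + DT)"
      using lat \<open>L > 0\<close> by (intro mult_left_mono) auto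
    then show ?thesis
      by (simp add: mult.assoc)
  qed
  also have "\<dots> = alpha powr L / ln A * exp (L * DT)"
    using assms by (simp add: algebra_simps exp_diff exp_add powr_def)
  finally have "alpha powr (- L) * ln A * exp (L * lam * t)
      \<le> alpha powr (- L) * ln A * (alpha powr L / ln A * exp (L * DT))"
    using assms by (intro mult_left_mono) auto
  then show ?thesis
    using assms by (simp add: powr_minus field_simps)
qed

lemma exp_div_eq_powr_mult:
  fixes alpha lam t L :: real
  assumes "alpha > 0"
  shows "exp (lam * t) / alpha = alpha powr (- L) * exp (L * lam * t) * (alpha * exp (- (lam * t))) powr (L - 1)"
proof -
  have "alpha powr (- L) * exp (L * lam * t) * (alpha * exp (- (lam * t))) powr (L - 1)
      = (alpha powr (- L) * alpha powr (L - 1)) * (exp (L * lam * t) * exp (- (lam * t) * (L - 1)))"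
    using assms by (simp add: powr_mult exp_powr_real algebra_simps)
  also have "\<dots> = alpha powr (- 1) * exp (lam * t)"
    by (simp add: powr_add[symmetric] exp_add[symmetric] algebra_simps)
  finally show ?thesis
    using assms by (simp add: powr_minus divide_inverse mult.commute)
qed

lemma eventually_ratio_bounds:
  fixes lam :: "real \<Rightarrow> real"
  assumes "p > 0" "L \<ge> 1" and lam_pos: "\<forall>alpha>0. lam alpha > 0"
    and lam_O: "lam \<in> O(\<lambda>alpha. alpha powr (- p))"
  defines "A \<equiv> \<lambda>alpha. alpha powr (2 * (L - 1)) / lam alpha"
  shows "\<forall>\<^sub>F alpha in at_top. 1 + G\<^sup>2 * ln alpha \<le> A alpha \<and> ln alpha \<le> 2 / p * ln (A alpha)
    \<and> exp 1 \<le> A alpha"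
proof -
  from lam_O obtain c where "c > 0"
    and c: "\<forall>\<^sub>F alpha in at_top. norm (lam alpha) \<le> c * norm (alpha powr (- p))"
    by (elim landau_o.bigE)
  have "\<forall>\<^sub>F alpha in at_top. 1 + G\<^sup>2 * ln alpha \<le> alpha powr p / c"
    "\<forall>\<^sub>F alpha in at_top. ln c \<le> p / 2 * ln alpha"
    "\<forall>\<^sub>F alpha in at_top. exp 1 \<le> alpha powr p / c"
    using \<open>p > 0\<close> \<open>c > 0\<close> by real_asymp+
  with c eventually_ge_at_top[of 1]
  show ?thesis
  proof eventually_elim
    case (elim alpha)
    then have "alpha > 0" "lam alpha > 0"
      using lam_pos by auto
    have "alpha powr p / c \<le> alpha powr (2 * (L - 1)) * alpha powr p / c"
      using ge_one_powr_ge_zero[of alpha "2 * (L - 1)"] elim \<open>L \<ge> 1\<close> \<open>c > 0\<close>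
      by (intro divide_right_mono) (auto intro: mult_le_cancel_right1[THEN iffD2])
    also have "\<dots> = alpha powr (2 * (L - 1)) / (c * alpha powr (- p))"
      using \<open>alpha > 0\<close> by (simp add: powr_minus field_simps)
    also have "\<dots> \<le> A alpha"
      unfolding A_def using elim \<open>lam alpha > 0\<close> \<open>alpha > 0\<close> by (intro divide_left_mono) auto
    finally have ratio: "alpha powr p / c \<le> A alpha" .
    have "p / 2 * ln alpha \<le> ln (alpha powr p / c)"
      using elim \<open>alpha > 0\<close> \<open>c > 0\<close> by (simp add: ln_div ln_powr)
    also have "\<dots> \<le> ln (A alpha)"
      using ratio \<open>alpha > 0\<close> \<open>c > 0\<close> by (intro ln_mono) auto
    finally show ?case
      using ratio elim \<open>p > 0\<close> by (auto simp: field_simps)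
  qed
qed

locale ntk_setting =
  fixes n :: nat and xs :: "nat \<Rightarrow> 'x" and ys :: "nat \<Rightarrow> real"
    and f :: "'a::euclidean_space \<Rightarrow> 'x \<Rightarrow> real" and L :: real and th0 :: 'a and eps :: real
  assumes n_pos: "n \<ge> 1"
    and labels: "\<And>i. i < n \<Longrightarrow> \<bar>ys i\<bar> = 1"
    and L_ge: "L \<ge> 1"
    and differentiable: "\<And>i x. (\<lambda>th. f th (xs i)) differentiable (at x)"
    and homogeneous: "\<And>x c th. c > 0 \<Longrightarrow> f (c *\<^sub>R th) x = c powr L * f th x"
    and init_zero: "\<And>x. f th0 x = 0"
    and eps_pos: "eps > 0"
    and grad_near_init: "\<And>th i. norm (th - th0) < eps \<Longrightarrow> i < n \<Longrightarrow>
        norm (grad (\<lambda>th. f th (xs i)) th - grad (\<lambda>th. f th (xs i)) th0) < gamma_ntk n xs ys f th0 / 2"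
begin

abbreviation grad_f :: "nat \<Rightarrow> 'a \<Rightarrow> 'a" where
  "grad_f i \<equiv> grad (\<lambda>th. f th (xs i))"

abbreviation gamma :: real where
  "gamma \<equiv> gamma_ntk n xs ys f th0"

definition grad_bound :: real where
  "grad_bound = (\<Sum>i<n. norm (grad_f i th0)) + gamma"

definition margin_moment :: "'a \<Rightarrow> real" where
  "margin_moment th = 1 / real n * (\<Sum>i<n. exp (- (ys i * f th (xs i))) * (ys i * f th (xs i)))"

text \<open>The constants \<open>C\<close> and \<open>DeltaT\<close> of the theorem; \<open>time_shift p\<close> is chosen so that
  \<open>error_const p * exp (L * time_shift p) \<le> eps / 2\<close>.\<close>

definition error_const :: "real \<Rightarrow> real" where
  "error_const p = 2 / gamma * (2 * L * ln (real n) / p + 2)"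

definition time_shift :: "real \<Rightarrow> real" where
  "time_shift p = min 0 (ln (eps / (2 * error_const p)) / L)"

text \<open>Instantiating \<open>grad_near_init\<close> at \<open>th0\<close> forces \<open>gamma > 0\<close>; this is why the
  theorem never needs its separability hypothesis.\<close>

lemma gamma_pos: "gamma > 0"
  using grad_near_init[of th0 0] eps_pos n_pos by simp

lemma error_const_pos: "p > 0 \<Longrightarrow> error_const p > 0"
  using gamma_pos L_ge n_pos by (simp add: error_const_def add_nonneg_pos)

lemma grad_bound_nonneg: "grad_bound \<ge> 0"
  using gamma_pos by (simp add: grad_bound_def sum_nonneg)

lemma grad_f_scaleR: "c > 0 \<Longrightarrow> grad_f i (c *\<^sub>R x) = c powr (L - 1) *\<^sub>R grad_f i x"
  by (rule grad_positively_homogeneous[OF differentiable homogeneous])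

lemma inner_grad_f_self: "grad_f i x \<bullet> x = L * f x (xs i)"
  by (rule inner_grad_self_positively_homogeneous[OF differentiable homogeneous])

lemma abs_inner_h_ntk_le: "\<bar>v \<bullet> h_ntk n xs ys f th0\<bar> \<le> norm v"
proof -
  have "\<bar>v \<bullet> h_ntk n xs ys f th0\<bar> \<le> norm v * norm (h_ntk n xs ys f th0)"
    by (rule Cauchy_Schwarz_ineq2)
  also have "\<dots> \<le> norm v"
    by (intro mult_left_le) (auto simp: h_ntk_def norm_sgn)
  finally show ?thesis .
qed

lemma grad_f_bounds_near_init:
  assumes "norm (v - th0) < eps" and "i < n"
  shows "gamma / 2 \<le> ys i * (grad_f i v \<bullet> h_ntk n xs ys f th0)"
    and "norm (grad_f i v) \<le> grad_bound"
proof -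
  define h where "h = h_ntk n xs ys f th0"
  have close: "norm (grad_f i v - grad_f i th0) < gamma / 2"
    using grad_near_init assms by blast
  have "gamma \<le> ys i * (grad_f i th0 \<bullet> h)"
    unfolding gamma_ntk_def h_def using \<open>i < n\<close> by (intro Min_le) auto
  moreover have "\<bar>ys i * ((grad_f i v - grad_f i th0) \<bullet> h)\<bar> \<le> norm (grad_f i v - grad_f i th0)"
    using labels[OF \<open>i < n\<close>] abs_inner_h_ntk_le by (simp add: abs_mult h_def)
  ultimately show "gamma / 2 \<le> ys i * (grad_f i v \<bullet> h_ntk n xs ys f th0)"
    using close by (simp add: h_def inner_diff_left algebra_simps)
  have "norm (grad_f i v) \<le> norm (grad_f i th0) + norm (grad_f i v - grad_f i th0)"
    by (metis norm_triangle_sub add.commute)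
  also have "\<dots> \<le> (\<Sum>j<n. norm (grad_f j th0)) + gamma"
    using close gamma_pos \<open>i < n\<close> by (intro add_mono member_le_sum) auto
  finally show "norm (grad_f i v) \<le> grad_bound"
    by (simp add: grad_bound_def)
qed

lemma exp_loss_grad_bounds:
  assumes "q > 0" and "norm (u - th0) < eps"
  shows "gamma / 2 * q powr (L - 1) * exp_loss n xs ys f (q *\<^sub>R u)
      \<le> norm (exp_loss_grad n xs ys f (q *\<^sub>R u))"
    and "norm (exp_loss_grad n xs ys f (q *\<^sub>R u))
      \<le> grad_bound * q powr (L - 1) * exp_loss n xs ys f (q *\<^sub>R u)"
proof -
  define w where "w i = exp (- (ys i * f (q *\<^sub>R u) (xs i)))" for i
  define S where "S = (\<Sum>i<n. (w i * ys i) *\<^sub>R grad_f i u)"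
  have loss: "exp_loss n xs ys f (q *\<^sub>R u) = 1 / real n * (\<Sum>i<n. w i)"
    by (simp add: exp_loss_def w_def)
  have "exp_loss_grad n xs ys f (q *\<^sub>R u) = - ((1 / real n * q powr (L - 1)) *\<^sub>R S)"
    using grad_f_scaleR[OF \<open>q > 0\<close>]
    by (simp add: exp_loss_grad_def S_def w_def scaleR_sum_right mult.commute mult.left_commute)
  then have norm_eq: "norm (exp_loss_grad n xs ys f (q *\<^sub>R u)) = 1 / real n * q powr (L - 1) * norm S"
    by simp
  note bounds = weighted_sum_bounds[where w = w and y = ys and v = "\<lambda>i. grad_f i u",
      OF _ labels grad_f_bounds_near_init[OF assms(2)]]
  have "S \<bullet> h_ntk n xs ys f th0 \<le> norm S"
    using abs_inner_h_ntk_le[of S] by linarith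
  then have "gamma / 2 * (\<Sum>i<n. w i) \<le> norm S"
    using bounds(1) by (force simp: S_def w_def)
  then show "gamma / 2 * q powr (L - 1) * exp_loss n xs ys f (q *\<^sub>R u)
      \<le> norm (exp_loss_grad n xs ys f (q *\<^sub>R u))"
    unfolding norm_eq loss using \<open>q > 0\<close> n_pos
    by (simp add: field_simps mult_left_mono)
  have "norm S \<le> grad_bound * (\<Sum>i<n. w i)"
    using bounds(2) by (force simp: S_def w_def)
  then show "norm (exp_loss_grad n xs ys f (q *\<^sub>R u))
      \<le> grad_bound * q powr (L - 1) * exp_loss n xs ys f (q *\<^sub>R u)"
    unfolding norm_eq loss using \<open>q > 0\<close> n_pos
    by (simp add: field_simps mult_left_mono)
qed

lemma growth_bound_le_error_bound:
  fixes p alpha lam t :: real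
  defines "A \<equiv> alpha powr (2 * (L - 1)) / lam"
  defines "Tb \<equiv> (ln alpha - ln (ln A) / L + time_shift p) / lam"
  assumes "p > 0" "alpha \<ge> 1" "lam > 0"
    and A: "1 + grad_bound\<^sup>2 * ln alpha \<le> A" "ln alpha \<le> 2 / p * ln A" "exp 1 \<le> A"
    and "0 \<le> t" "t \<le> Tb"
  shows "2 / gamma * alpha powr (- L) * exp (L * lam * t)
      * (L * lam * ln (real n) * t + ln (1 + grad_bound\<^sup>2 * alpha powr (2 * L - 2) * t))
      \<le> error_const p * (alpha powr (- L) * ln A) * exp (L * lam * t)"
    and "error_const p * (alpha powr (- L) * ln A) * exp (L * lam * t) \<le> eps / 2"
proof -
  have "ln A \<ge> 1"
    using A(3) by (metis ln_exp ln_mono exp_gt_zero)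
  have "L > 0"
    using L_ge by simp
  have shift: "time_shift p \<le> 0" "exp (L * time_shift p) \<le> eps / (2 * error_const p)"
    using \<open>L > 0\<close> eps_pos error_const_pos[OF \<open>p > 0\<close>]
    by (auto simp: time_shift_def min_def field_simps)
  have lat: "lam * t \<le> ln alpha - ln (ln A) / L + time_shift p"
    using \<open>t \<le> Tb\<close> \<open>lam > 0\<close> by (simp add: Tb_def field_simps)
  moreover have "ln (ln A) / L \<ge> 0"
    using \<open>ln A \<ge> 1\<close> \<open>L > 0\<close> by simp
  ultimately have "lam * t \<le> ln alpha"
    using shift(1) by linarith
  then have "L * lam * ln (real n) * t + ln (1 + grad_bound\<^sup>2 * alpha powr (2 * L - 2) * t)
      \<le> (2 * L * ln (real n) / p + 2) * ln A"
    using growth_terms_le_ln_ratio[OF \<open>alpha \<ge> 1\<close> \<open>lam > 0\<close> \<open>L > 0\<close> \<open>p > 0\<close> n_pos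
        \<open>0 \<le> t\<close> _ A(1,2)]
      \<open>lam > 0\<close> \<open>alpha \<ge> 1\<close> by (simp add: A_def field_simps)
  then have "2 / gamma * alpha powr (- L) * exp (L * lam * t)
      * (L * lam * ln (real n) * t + ln (1 + grad_bound\<^sup>2 * alpha powr (2 * L - 2) * t))
      \<le> 2 / gamma * alpha powr (- L) * exp (L * lam * t) * ((2 * L * ln (real n) / p + 2) * ln A)"
    using gamma_pos by (intro mult_left_mono) auto
  then show "2 / gamma * alpha powr (- L) * exp (L * lam * t)
      * (L * lam * ln (real n) * t + ln (1 + grad_bound\<^sup>2 * alpha powr (2 * L - 2) * t))
      \<le> error_const p * (alpha powr (- L) * ln A) * exp (L * lam * t)"
    by (simp add: error_const_def field_simps)
  have "error_const p * (alpha powr (- L) * ln A * exp (L * lam * t)) \<le> error_const p * exp (L * time_shift p)"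
    using scaled_exp_le_exp_shift[OF _ \<open>L > 0\<close> _ lat] \<open>alpha \<ge> 1\<close> \<open>ln A \<ge> 1\<close>
      error_const_pos[OF \<open>p > 0\<close>]
    by (intro mult_left_mono) auto
  also have "\<dots> \<le> eps / 2"
    using shift(2) error_const_pos[OF \<open>p > 0\<close>] by (simp add: field_simps)
  finally show "error_const p * (alpha powr (- L) * ln A) * exp (L * lam * t) \<le> eps / 2"
    by (simp add: mult.assoc)
qed

end

locale ntk_flow = ntk_setting n xs ys f L th0 eps
  for n :: nat and xs :: "nat \<Rightarrow> 'x" and ys :: "nat \<Rightarrow> real"
    and f :: "'a::euclidean_space \<Rightarrow> 'x \<Rightarrow> real" and L :: real and th0 :: 'a and eps :: real +
  fixes alpha lam :: real and theta :: "real \<Rightarrow> 'a"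
  assumes alpha_pos: "alpha > 0" and lam_pos: "lam > 0"
    and flow_start: "theta 0 = alpha *\<^sub>R th0"
    and flow: "\<And>t. t \<ge> 0 \<Longrightarrow>
        (theta has_vector_derivative - grad (reg_loss lam n xs ys f) (theta t)) (at t within {0..})"
begin

definition rescaled_flow :: "real \<Rightarrow> 'a" where
  "rescaled_flow t = (exp (lam * t) / alpha) *\<^sub>R theta t"

lemma flow_has_vector_derivative:
  assumes "t > 0"
  shows "(theta has_vector_derivative - (exp_loss_grad n xs ys f (theta t) + lam *\<^sub>R theta t)) (at t)"
proof -
  have "at t within {0..} = at t"
    using assms by (intro at_within_open_subset[of t "{0<..}"]) auto
  then show ?thesis
    using flow[of t] assms by (simp add: grad_reg_loss[where xs = xs and f = f, OF differentiable])
qed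

lemma continuous_on_flow: "continuous_on {0..} theta"
  unfolding continuous_on_eq_continuous_within
  using flow by (blast intro: has_vector_derivative_continuous)

lemma loss_ode_along_flow:
  "loss_ode (\<lambda>t. exp_loss n xs ys f (theta t)) (\<lambda>t. margin_moment (theta t))
     (\<lambda>t. norm (exp_loss_grad n xs ys f (theta t))) (L * lam)"
proof
  show "exp_loss n xs ys f (theta t) > 0" for t
    using n_pos by (auto simp: exp_loss_def lessThan_empty_iff intro!: divide_pos_pos sum_pos)
  show "exp_loss n xs ys f (theta 0) = 1"
    using n_pos alpha_pos by (simp add: exp_loss_def flow_start homogeneous init_zero)
  have "continuous_on UNIV (\<lambda>th. f th (xs i))" for i
    by (simp add: continuous_at_imp_continuous_on differentiable_imp_continuous_within differentiable)
  then show "continuous_on {0..} (\<lambda>t. exp_loss n xs ys f (theta t))"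
    unfolding exp_loss_def
    by (intro continuous_intros continuous_on_compose2[OF _ continuous_on_flow, of UNIV]) auto
  show "margin_moment (theta t) \<le> - exp_loss n xs ys f (theta t) * ln (exp_loss n xs ys f (theta t))"
    for t
    using mean_exp_neg_mult_le_entropy[OF n_pos] by (simp add: margin_moment_def exp_loss_def)
  show "L * lam \<ge> 0"
    using L_ge lam_pos by simp
  fix t :: real
  assume "t > 0"
  let ?g = "exp_loss_grad n xs ys f (theta t)"
  have "((\<lambda>t. exp_loss n xs ys f (theta t)) has_real_derivative - (?g + lam *\<^sub>R theta t) \<bullet> ?g) (at t)"
    by (rule has_field_derivative_gderiv_compose[OF gderiv_exp_loss[where xs = xs and f = f, OF differentiable]
          flow_has_vector_derivative[OF \<open>t > 0\<close>]])
  moreover have "theta t \<bullet> ?g = - L * margin_moment (theta t)"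
    unfolding margin_moment_def by (intro inner_exp_loss_grad_self inner_grad_f_self)
  then have "- (?g + lam *\<^sub>R theta t) \<bullet> ?g = - (norm ?g)\<^sup>2 + L * lam * margin_moment (theta t)"
    by (simp add: inner_diff_left power2_norm_eq_inner)
  ultimately show "((\<lambda>t. exp_loss n xs ys f (theta t)) has_real_derivative
      - (norm ?g)\<^sup>2 + L * lam * margin_moment (theta t)) (at t)"
    by simp
qed

text \<open>Rescaling by \<open>exp (lam * t)\<close> exactly cancels the weight decay term of the flow.\<close>

lemma rescaled_flow_has_vector_derivative:
  assumes "t > 0"
  shows "(rescaled_flow has_vector_derivative
      (exp (lam * t) / alpha) *\<^sub>R - exp_loss_grad n xs ys f (theta t)) (at t)"
proof -
  have "((\<lambda>t. exp (lam * t) / alpha) has_real_derivative lam * exp (lam * t) / alpha) (at t)"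
    using alpha_pos by (auto intro!: derivative_eq_intros)
  from has_vector_derivative_scaleR[OF this flow_has_vector_derivative[OF assms]]
  show ?thesis
    unfolding rescaled_flow_def[abs_def] by (simp add: algebra_simps)
qed

lemma continuous_on_rescaled_flow: "continuous_on {0..} rescaled_flow"
  unfolding rescaled_flow_def[abs_def] using alpha_pos by (intro continuous_intros continuous_on_flow) auto

lemma rescaled_flow_start: "rescaled_flow 0 = th0"
  using alpha_pos by (simp add: rescaled_flow_def flow_start)

lemma rescaled_flow_near_init_bounds:
  assumes "t > 0" and "norm (rescaled_flow t - th0) < eps"
  defines "l \<equiv> exp_loss n xs ys f (theta t)" and "v \<equiv> norm (exp_loss_grad n xs ys f (theta t))"
  shows "norm ((exp (lam * t) / alpha) *\<^sub>R - exp_loss_grad n xs ys f (theta t))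
      \<le> 2 / gamma * alpha powr (- L) * exp (L * lam * t) * v\<^sup>2 / l"
    and "v\<^sup>2 \<le> grad_bound\<^sup>2 * alpha powr (2 * L - 2) * l\<^sup>2"
proof -
  define q where "q = alpha * exp (- (lam * t))"
  define Q where "Q = q powr (L - 1)"
  have "q > 0"
    using alpha_pos by (simp add: q_def)
  have theta_eq: "theta t = q *\<^sub>R rescaled_flow t"
    using alpha_pos by (simp add: q_def rescaled_flow_def exp_minus field_simps)
  note bounds = exp_loss_grad_bounds[OF \<open>q > 0\<close> assms(2), folded theta_eq Q_def l_def]
  have "l > 0"
    using loss_ode.pos[OF loss_ode_along_flow] \<open>t > 0\<close> by (simp add: l_def)
  have "Q \<le> alpha powr (L - 1)"
    unfolding Q_def q_def using alpha_pos lam_pos \<open>t > 0\<close> L_ge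
    by (intro powr_mono2) (auto simp: mult_le_cancel_left1)
  have "exp (lam * t) / alpha = alpha powr (- L) * exp (L * lam * t) * Q"
    unfolding Q_def q_def using alpha_pos by (rule exp_div_eq_powr_mult)
  have "norm ((exp (lam * t) / alpha) *\<^sub>R - exp_loss_grad n xs ys f (theta t)) = exp (lam * t) / alpha * v"
    using alpha_pos by (simp add: v_def)
  also have "\<dots> = (2 / gamma * alpha powr (- L) * exp (L * lam * t)) * (gamma / 2 * Q) * v"
    using \<open>exp (lam * t) / alpha = alpha powr (- L) * exp (L * lam * t) * Q\<close> gamma_pos by simp
  also have "\<dots> \<le> (2 / gamma * alpha powr (- L) * exp (L * lam * t)) * (v / l) * v"
    using bounds(1) \<open>l > 0\<close> gamma_pos
    by (intro mult_right_mono mult_left_mono) (auto simp: le_divide_eq v_def)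
  finally show "norm ((exp (lam * t) / alpha) *\<^sub>R - exp_loss_grad n xs ys f (theta t))
      \<le> 2 / gamma * alpha powr (- L) * exp (L * lam * t) * v\<^sup>2 / l"
    by (simp add: power2_eq_square)
  have "v \<le> grad_bound * Q * l"
    using bounds(2) by (simp add: v_def)
  also have "\<dots> \<le> grad_bound * alpha powr (L - 1) * l"
    using \<open>Q \<le> alpha powr (L - 1)\<close> grad_bound_nonneg \<open>l > 0\<close>
    by (intro mult_right_mono mult_left_mono) auto
  finally have "v\<^sup>2 \<le> (grad_bound * alpha powr (L - 1) * l)\<^sup>2"
    by (intro power_mono) (auto simp: v_def)
  also have "\<dots> = grad_bound\<^sup>2 * alpha powr (2 * L - 2) * l\<^sup>2"
    using alpha_pos by (simp add: power_mult_distrib powr_power algebra_simps)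
  finally show "v\<^sup>2 \<le> grad_bound\<^sup>2 * alpha powr (2 * L - 2) * l\<^sup>2" .
qed

lemma rescaled_flow_bound:
  assumes small: "\<And>t. 0 \<le> t \<Longrightarrow> t \<le> T \<Longrightarrow> 2 / gamma * alpha powr (- L) * exp (L * lam * t)
      * (L * lam * ln (real n) * t + ln (1 + grad_bound\<^sup>2 * alpha powr (2 * L - 2) * t)) < eps"
    and "0 \<le> t" "t \<le> T"
  shows "norm (rescaled_flow t - th0) \<le> 2 / gamma * alpha powr (- L) * exp (L * lam * t)
      * (L * lam * ln (real n) * t + ln (1 + grad_bound\<^sup>2 * alpha powr (2 * L - 2) * t))"
proof -
  interpret loss_ode "\<lambda>t. exp_loss n xs ys f (theta t)" "\<lambda>t. margin_moment (theta t)"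
    "\<lambda>t. norm (exp_loss_grad n xs ys f (theta t))" "L * lam"
    by (rule loss_ode_along_flow)
  have "norm (rescaled_flow t - rescaled_flow 0) \<le> 2 / gamma * alpha powr (- L) * exp (L * lam * t)
      * (L * lam * ln (real n) * t + ln (1 + grad_bound\<^sup>2 * alpha powr (2 * L - 2) * t))"
  proof (rule displacement_bound[OF _ continuous_on_rescaled_flow rescaled_flow_has_vector_derivative])
    show "- ln (real n) * exp_loss n xs ys f (theta s) \<le> margin_moment (theta s)"
      if "exp_loss n xs ys f (theta s) \<le> 1" for s
      using mean_exp_neg_mult_ge[OF n_pos] that by (simp add: margin_moment_def exp_loss_def)
  next
    show "norm ((exp (lam * s) / alpha) *\<^sub>R - exp_loss_grad n xs ys f (theta s))
        \<le> 2 / gamma * alpha powr (- L) * exp (L * lam * s)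
          * (norm (exp_loss_grad n xs ys f (theta s)))\<^sup>2 / exp_loss n xs ys f (theta s)
      \<and> (norm (exp_loss_grad n xs ys f (theta s)))\<^sup>2
        \<le> grad_bound\<^sup>2 * alpha powr (2 * L - 2) * (exp_loss n xs ys f (theta s))\<^sup>2"
      if "s > 0" and "norm (rescaled_flow s - rescaled_flow 0) < eps" for s
      using rescaled_flow_near_init_bounds that by (simp add: rescaled_flow_start)
  qed (use small gamma_pos n_pos \<open>0 \<le> t\<close> \<open>t \<le> T\<close> in \<open>auto simp: mult.assoc\<close>)
  then show ?thesis
    by (simp add: rescaled_flow_start)
qed

lemma flow_estimate:
  fixes p :: real
  defines "A \<equiv> alpha powr (2 * (L - 1)) / lam"
  defines "Tb \<equiv> (ln alpha - ln (ln A) / L + time_shift p) / lam"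
  assumes "p > 0" "alpha \<ge> 1"
    and "1 + grad_bound\<^sup>2 * ln alpha \<le> A" "ln alpha \<le> 2 / p * ln A" "exp 1 \<le> A"
  shows "ereal Tb \<le> T_max lam alpha theta th0 eps \<and>
    (\<forall>t. 0 \<le> t \<and> t \<le> Tb \<longrightarrow> norm ((exp (lam * t) / alpha) *\<^sub>R theta t - th0)
      \<le> error_const p * (alpha powr (- L) * ln A) * exp (L * lam * t))"
proof -
  note error_bounds = growth_bound_le_error_bound[OF assms(3,4) lam_pos assms(5-7)[unfolded A_def],
      folded A_def, folded Tb_def]
  have bound: "norm ((exp (lam * t) / alpha) *\<^sub>R theta t - th0)
      \<le> error_const p * (alpha powr (- L) * ln A) * exp (L * lam * t)" if "0 \<le> t" "t \<le> Tb" for t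
  proof -
    have "norm (rescaled_flow t - th0) \<le> 2 / gamma * alpha powr (- L) * exp (L * lam * t)
      * (L * lam * ln (real n) * t + ln (1 + grad_bound\<^sup>2 * alpha powr (2 * L - 2) * t))"
      using error_bounds eps_pos by (intro rescaled_flow_bound[OF _ that]) fastforce
    then show ?thesis
      using error_bounds(1)[OF that] by (simp add: rescaled_flow_def)
  qed
  moreover have "ereal Tb \<le> T_max lam alpha theta th0 eps"
  proof (rule T_max_ge)
    fix t assume "0 \<le> t" "t \<le> Tb"
    then show "norm ((exp (lam * t) / alpha) *\<^sub>R theta t - th0) \<le> eps"
      using bound error_bounds(2) eps_pos by fastforce
  qed
  ultimately show ?thesis
    by blast
qed

end

lemma (in ntk_setting) eventually_flow_estimate:
  fixes p :: real and lam :: "real \<Rightarrow> real" and theta :: "real \<Rightarrow> real \<Rightarrow> 'a"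
  assumes "p > 0" "L \<ge> 1" and lam_pos: "\<forall>alpha>0. lam alpha > 0"
    and "lam \<in> O(\<lambda>alpha. alpha powr (- p))"
    and flow_start: "\<forall>alpha>0. theta alpha 0 = alpha *\<^sub>R th0"
    and flow: "\<forall>alpha>0. \<forall>t\<ge>0. (theta alpha has_vector_derivative
        - grad (reg_loss (lam alpha) n xs ys f) (theta alpha t)) (at t within {0..})"
  shows "\<forall>\<^sub>F alpha in at_top.
     (let A = alpha powr (2 * (L - 1)) / lam alpha;
          Tb = (ln alpha - ln (ln A) / L + time_shift p) / lam alpha
      in T_max (lam alpha) alpha (theta alpha) th0 eps \<ge> ereal Tb \<and>
         (\<forall>t. 0 \<le> t \<and> t \<le> Tb \<longrightarrow>
            norm ((exp (lam alpha * t) / alpha) *\<^sub>R theta alpha t - th0)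
              \<le> error_const p * (alpha powr (- L) * ln A) * exp (L * lam alpha * t)))"
  using eventually_ratio_bounds[OF assms(1-4), of grad_bound] eventually_ge_at_top[of 1]
proof eventually_elim
  case (elim alpha)
  interpret ntk_flow n xs ys f L th0 eps alpha "lam alpha" "theta alpha"
    using elim lam_pos flow_start flow by unfold_locales auto
  show ?case
    unfolding Let_def using flow_estimate[OF \<open>p > 0\<close>] elim by blast
qed

theorem lemmaC5:
  fixes n :: nat
    and xs :: "nat \<Rightarrow> 'x"
    and ys :: "nat \<Rightarrow> real"
    and f :: "'a::euclidean_space \<Rightarrow> 'x \<Rightarrow> real"
    and L :: real
    and th0 :: 'a
    and p :: real
    and lam :: "real \<Rightarrow> real"
    and eps :: real
    and theta :: "real \<Rightarrow> real \<Rightarrow> 'a"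
  assumes n_pos: "n \<ge> 1"
    and labels: "\<forall>i<n. ys i \<in> {-1, 1}"
    and L_ge: "L \<ge> 1"
    and C2: "\<forall>x. C2_fun (\<lambda>th. f th x)"
    and homog: "\<forall>x c th. c > 0 \<longrightarrow> f (c *\<^sub>R th) x = c powr L * f th x"
    and init_zero: "\<forall>x. f th0 x = 0"
    and p_pos: "p > 0"
    and lam_pos: "\<forall>alpha>0. lam alpha > 0"
    and lam_Theta: "lam \<in> \<Theta>(\<lambda>alpha. alpha powr (- p))"
    and sep: "\<exists>h. \<forall>i<n. ys i * inner (grad (\<lambda>th. f th (xs i)) th0) h > 0"
    and eps_pos: "eps > 0"
    and eps_prop: "\<forall>th. norm (th - th0) < eps \<longrightarrow>
        (\<forall>i<n. norm (grad (\<lambda>th. f th (xs i)) th - grad (\<lambda>th. f th (xs i)) th0)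
                 < gamma_ntk n xs ys f th0 / 2)"
    and flow_init: "\<forall>alpha>0. theta alpha 0 = alpha *\<^sub>R th0"
    and flow: "\<forall>alpha>0. \<forall>t\<ge>0. (theta alpha has_vector_derivative
        - grad (reg_loss (lam alpha) n xs ys f) (theta alpha t)) (at t within {0..})"
  shows "\<exists>DeltaT C. \<forall>\<^sub>F alpha in at_top.
     (let A = alpha powr (2 * (L - 1)) / lam alpha;
          Tb = (ln alpha - ln (ln A) / L + DeltaT) / lam alpha
      in T_max (lam alpha) alpha (theta alpha) th0 eps \<ge> ereal Tb \<and>
         (\<forall>t. 0 \<le> t \<and> t \<le> Tb \<longrightarrow>
            norm ((exp (lam alpha * t) / alpha) *\<^sub>R theta alpha t - th0)
              \<le> C * (alpha powr (- L) * ln A) * exp (L * lam alpha * t)))"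
proof -
  interpret ntk_setting n xs ys f L th0 eps
  proof
    show "(\<lambda>th. f th (xs i)) differentiable (at x)" for i x
      using C2 by (simp add: C2_fun_def)
  qed (use n_pos labels L_ge homog init_zero eps_pos eps_prop in auto)
  show ?thesis
    using eventually_flow_estimate[OF p_pos L_ge lam_pos bigthetaD1[OF lam_Theta] flow_init flow]
    by blast
qed

end
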